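(* Let $R$ be a commutative ring with nonzero identity, $\delta$ an expansion of ideals of $R$, and $I$ a proper ideal of $R$ with $\sqrt{\delta(I)}=\delta(\sqrt{I})$. If $I$ is a $\delta$-$n$-ideal of $R$, then $\sqrt{I}$ is a $\delta$-$n$-ideal of $R$. In particular, $I$ is a quasi $n$-ideal of $R$ if and only if $\sqrt{I}$ is an $n$-ideal of $R$.
   Context: An expansion of ideals of a ring $R$ is a map $\delta$ from the set of ideals of $R$ to itself such that $I\subseteq\delta(I)$ for every ideal $I$, and $\delta(I)\subseteq\delta(J)$ whenever $I\subseteq J$. $\sqrt{0}$ denotes the nilradical of $R$. Given an expansion $\delta$, a proper ideal $I$ of $R$ is a $\delta$-$n$-ideal if whenever $a,b\in R$ with $ab\in I$ and $a\notin\sqrt{0}$, then $b\in\delta(I)$. A quasi $n$-ideal is a $\delta_1$-$n$-ideal, where $\delta_1(J)=\sqrt{J}$. An $n$-ideal is a proper ideal $I$ such that $ab\in I$ and $a\notin\sqrt{0}$ imply $b\in I$. *)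

theory Defs
  imports "HOL-Algebra.Ideal"
begin

definition rad :: "('a, 'b) ring_scheme \<Rightarrow> 'a set \<Rightarrow> 'a set" where
  "rad R I = {a \<in> carrier R. \<exists>n::nat. a [^]\<^bsub>R\<^esub> n \<in> I}"

definition nilrad :: "('a, 'b) ring_scheme \<Rightarrow> 'a set" where
  "nilrad R = rad R {\<zero>\<^bsub>R\<^esub>}"

definition expansion :: "('a, 'b) ring_scheme \<Rightarrow> ('a set \<Rightarrow> 'a set) \<Rightarrow> bool" where
  "expansion R \<delta> \<longleftrightarrow>
     (\<forall>I. ideal I R \<longrightarrow> ideal (\<delta> I) R \<and> I \<subseteq> \<delta> I) \<and>
     (\<forall>I J. ideal I R \<longrightarrow> ideal J R \<longrightarrow> I \<subseteq> J \<longrightarrow> \<delta> I \<subseteq> \<delta> J)"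

definition delta_n_ideal :: "('a, 'b) ring_scheme \<Rightarrow> ('a set \<Rightarrow> 'a set) \<Rightarrow> 'a set \<Rightarrow> bool" where
  "delta_n_ideal R \<delta> I \<longleftrightarrow> ideal I R \<and> I \<noteq> carrier R \<and>
     (\<forall>a \<in> carrier R. \<forall>b \<in> carrier R.
        a \<otimes>\<^bsub>R\<^esub> b \<in> I \<longrightarrow> a \<notin> nilrad R \<longrightarrow> b \<in> \<delta> I)"

definition quasi_n_ideal :: "('a, 'b) ring_scheme \<Rightarrow> 'a set \<Rightarrow> bool" where
  "quasi_n_ideal R I \<longleftrightarrow> delta_n_ideal R (rad R) I"

definition n_ideal :: "('a, 'b) ring_scheme \<Rightarrow> 'a set \<Rightarrow> bool" where
  "n_ideal R I \<longleftrightarrow> ideal I R \<and> I \<noteq> carrier R \<and>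
     (\<forall>a \<in> carrier R. \<forall>b \<in> carrier R.
        a \<otimes>\<^bsub>R\<^esub> b \<in> I \<longrightarrow> a \<notin> nilrad R \<longrightarrow> b \<in> I)"

end

theory Submission
  imports Defs
begin

text \<open>If \<open>(ab)\<^sup>n \<in> I\<close> with \<open>a\<close> not nilpotent, then \<open>a\<^sup>n\<close> is not nilpotent either, so the
  \<open>\<delta>\<close>-\<open>n\<close>-property of \<open>I\<close> applied to \<open>a\<^sup>n b\<^sup>n\<close> gives \<open>b\<^sup>n \<in> \<delta>(I)\<close>, i.e. \<open>b \<in> \<surd>\<delta>(I) = \<delta>(\<surd>I)\<close>. The second claim is the
  case \<open>\<delta> = \<surd>\<close>, where the hypothesis holds trivially and \<open>\<surd>\<surd>I = \<surd>I\<close>.\<close>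

context cring
begin

lemma nat_pow_in_ideal_mono:
  assumes "ideal I R" "a \<in> carrier R" "a [^] (m::nat) \<in> I" "m \<le> k"
  shows "a [^] k \<in> I"
proof -
  have "a [^] k = a [^] m \<otimes> a [^] (k - m)"
    using assms by (simp add: nat_pow_mult)
  then show ?thesis
    using assms ideal.I_r_closed by fastforce
qed

text \<open>A substitute for the binomial theorem: every monomial of total degree at least
  \<open>m + n\<close> in \<open>a\<close> and \<open>b\<close> lies in \<open>I\<close>.\<close>

lemma monomial_add_pow_in_ideal:
  assumes I: "ideal I R" and a: "a \<in> carrier R" and b: "b \<in> carrier R"
    and am: "a [^] (m::nat) \<in> I" and bn: "b [^] (n::nat) \<in> I"
    and deg: "m + n \<le> i + j + k"
  shows "a [^] i \<otimes> b [^] j \<otimes> (a \<oplus> b) [^] k \<in> I"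
  using deg
proof (induction k arbitrary: i j)
  case 0
  then consider "m \<le> i" | "n \<le> j" by linarith
  then show ?case
  proof cases
    case 1
    then have "a [^] i \<in> I" using nat_pow_in_ideal_mono[OF I a am] by blast
    then show ?thesis using I a b ideal.I_r_closed by fastforce
  next
    case 2
    then have "b [^] j \<in> I" using nat_pow_in_ideal_mono[OF I b bn] by blast
    then show ?thesis using I a b ideal.I_l_closed by fastforce
  qed
next
  case (Suc k)
  have "a [^] i \<otimes> b [^] j \<otimes> (a \<oplus> b) [^] Suc k =
      a [^] Suc i \<otimes> b [^] j \<otimes> (a \<oplus> b) [^] k \<oplus> a [^] i \<otimes> b [^] Suc j \<otimes> (a \<oplus> b) [^] k"
    using a b by (simp add: nat_pow_Suc2 m_ac r_distr l_distr)
  moreover have "a [^] Suc i \<otimes> b [^] j \<otimes> (a \<oplus> b) [^] k \<in> I"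
    using Suc by (metis add_Suc add_Suc_right)
  moreover have "a [^] i \<otimes> b [^] Suc j \<otimes> (a \<oplus> b) [^] k \<in> I"
    using Suc by (metis add_Suc add_Suc_right)
  ultimately show ?case
    using I by (simp add: additive_subgroup.a_closed ideal.axioms(1))
qed

lemma add_pow_in_ideal:
  assumes "ideal I R" "a \<in> carrier R" "b \<in> carrier R" "a [^] (m::nat) \<in> I" "b [^] (n::nat) \<in> I"
  shows "(a \<oplus> b) [^] (m + n) \<in> I"
  using monomial_add_pow_in_ideal[OF assms, of 0 0 "m + n"] assms(2,3) by simp

lemma ideal_rad:
  assumes I: "ideal I R"
  shows "ideal (rad R I) R"
proof (rule idealI)
  show "ring R" by (rule ring_axioms)
  show "subgroup (rad R I) (add_monoid R)"
  proof (rule a_group[THEN group.subgroupI])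
    show "rad R I \<subseteq> carrier (add_monoid R)" by (auto simp: rad_def)
    have "\<zero> [^] (1::nat) \<in> I"
      using I by (simp add: additive_subgroup.zero_closed ideal.axioms(1))
    then show "rad R I \<noteq> {}" unfolding rad_def by blast
  next
    fix x assume "x \<in> rad R I"
    then obtain n where x: "x \<in> carrier R" "x [^] (n::nat) \<in> I" by (auto simp: rad_def)
    have "(\<ominus> x) [^] n = (\<ominus> \<one>) [^] n \<otimes> x [^] n"
    proof -
      have "\<ominus> x = (\<ominus> \<one>) \<otimes> x" using x by (simp add: l_minus)
      then show ?thesis using x by (simp add: pow_mult_distrib[OF m_comm])
    qed
    then have "(\<ominus> x) [^] n \<in> I" using x I ideal.I_l_closed by fastforce
    then show "inv\<^bsub>add_monoid R\<^esub> x \<in> rad R I"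
      using x by (auto simp: rad_def a_inv_def[symmetric])
  next
    fix x y assume "x \<in> rad R I" "y \<in> rad R I"
    then obtain m n where x: "x \<in> carrier R" "x [^] (m::nat) \<in> I"
      and y: "y \<in> carrier R" "y [^] (n::nat) \<in> I" by (auto simp: rad_def)
    have "(x \<oplus> y) [^] (m + n) \<in> I" by (rule add_pow_in_ideal[OF I x(1) y(1) x(2) y(2)])
    then show "x \<otimes>\<^bsub>add_monoid R\<^esub> y \<in> rad R I"
      using x y by (auto simp: rad_def)
  qed
next
  fix a x assume "a \<in> rad R I" "x \<in> carrier R"
  then obtain n where a: "a \<in> carrier R" "a [^] (n::nat) \<in> I" and x: "x \<in> carrier R"
    by (auto simp: rad_def)
  have "(x \<otimes> a) [^] n = x [^] n \<otimes> a [^] n" using a x by (simp add: pow_mult_distrib m_comm)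
  then have "(x \<otimes> a) [^] n \<in> I" using a x I ideal.I_l_closed by fastforce
  then show "x \<otimes> a \<in> rad R I" using a x by (auto simp: rad_def)
  then show "a \<otimes> x \<in> rad R I" using a x by (simp add: m_comm)
qed

lemma subset_rad: "I \<subseteq> carrier R \<Longrightarrow> I \<subseteq> rad R I"
  unfolding rad_def by (force intro: exI[of _ "1::nat"])

lemma rad_rad: "rad R (rad R I) = rad R I"
proof
  show "rad R (rad R I) \<subseteq> rad R I"
    unfolding rad_def by (auto simp: nat_pow_pow)
  show "rad R I \<subseteq> rad R (rad R I)"
    by (rule subset_rad) (auto simp: rad_def)
qed

lemma nat_pow_notin_nilrad:
  assumes "a \<in> carrier R" "a \<notin> nilrad R"
  shows "a [^] (n::nat) \<notin> nilrad R"
  using assms unfolding nilrad_def rad_def by (auto simp: nat_pow_pow)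

lemma rad_neq_carrier:
  assumes "ideal I R" "I \<noteq> carrier R"
  shows "rad R I \<noteq> carrier R"
proof
  assume "rad R I = carrier R"
  then have "\<one> \<in> rad R I" by simp
  then have "\<one> \<in> I" by (auto simp: rad_def)
  then show False using assms ideal.one_imp_carrier by blast
qed

lemma delta_n_ideal_rad_mult:
  assumes "delta_n_ideal R \<delta> I" "a \<in> carrier R" "b \<in> carrier R"
    and "a \<otimes> b \<in> rad R I" "a \<notin> nilrad R"
  shows "b \<in> rad R (\<delta> I)"
proof -
  obtain n where "(a \<otimes> b) [^] (n::nat) \<in> I" using assms(4) by (auto simp: rad_def)
  then have "a [^] n \<otimes> b [^] n \<in> I" using assms(2,3) by (simp add: pow_mult_distrib[OF m_comm])
  then have "b [^] n \<in> \<delta> I"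
    using assms nat_pow_notin_nilrad unfolding delta_n_ideal_def by blast
  then show ?thesis using assms(3) unfolding rad_def by blast
qed

lemma delta_n_ideal_rad:
  assumes "delta_n_ideal R \<delta> I" "rad R (\<delta> I) = \<delta> (rad R I)"
  shows "delta_n_ideal R \<delta> (rad R I)"
proof -
  have "ideal I R" "I \<noteq> carrier R"
    using assms(1) by (simp_all add: delta_n_ideal_def)
  then show ?thesis
    using delta_n_ideal_rad_mult[OF assms(1)] assms(2) ideal_rad rad_neq_carrier
    unfolding delta_n_ideal_def[of R \<delta> "rad R I"] by auto
qed

lemma quasi_n_ideal_iff_n_ideal_rad:
  assumes "ideal I R" "I \<noteq> carrier R"
  shows "quasi_n_ideal R I \<longleftrightarrow> n_ideal R (rad R I)"
proof
  assume "quasi_n_ideal R I"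
  then have "delta_n_ideal R (rad R) (rad R I)"
    unfolding quasi_n_ideal_def by (rule delta_n_ideal_rad) (rule refl)
  then show "n_ideal R (rad R I)"
    unfolding delta_n_ideal_def n_ideal_def rad_rad .
next
  assume "n_ideal R (rad R I)"
  moreover have "I \<subseteq> rad R I"
    using assms(1) by (simp add: subset_rad ideal.axioms(1) additive_subgroup.a_subset)
  ultimately show "quasi_n_ideal R I"
    using assms unfolding quasi_n_ideal_def delta_n_ideal_def n_ideal_def by blast
qed

end

theorem proposition2p17:
  fixes R (structure) and \<delta> :: "'a set \<Rightarrow> 'a set" and I :: "'a set"
  assumes "cring R" and "\<one>\<^bsub>R\<^esub> \<noteq> \<zero>\<^bsub>R\<^esub>"
    and "expansion R \<delta>"
    and "ideal I R" and "I \<noteq> carrier R"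
    and "rad R (\<delta> I) = \<delta> (rad R I)"
  shows "(delta_n_ideal R \<delta> I \<longrightarrow> delta_n_ideal R \<delta> (rad R I))
     \<and> (quasi_n_ideal R I \<longleftrightarrow> n_ideal R (rad R I))"
  using cring.delta_n_ideal_rad[OF assms(1) _ assms(6)]
    cring.quasi_n_ideal_iff_n_ideal_rad[OF assms(1,4,5)]
  by blast

end
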